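(* Let $\widehat M$ be a cooperative Markov game with MMDP $M$ and $(S_{target},S_{avoid})$ a reach-avoid objective, and let $v^*=\sup_{\pi_{act}}\mathbb P_{M_{\pi_{act}}}((\neg S_{avoid})\mathcal U S_{target})$. Let $(x^*_{s,a},x^*_{o,c})$ be an optimal solution of the optimization problem (OPT) below, and define $\pi^*_{comm}(o)(c)=x^*_{o,c}/\sum_{d\in\mathcal A_{comm}}x^*_{o,d}$ and $\pi^*_{act}(s)(a)=x^*_{s,a}/\sum_{b\in\mathcal A}x^*_{s,b}$ (arbitrary distributions where the denominator is $0$). Then $\mathbb P_{M_{\pi^*_{act}}}((\neg S_{avoid})\mathcal U S_{target})=v^*$, and for every pair $(\pi'_{comm},\pi'_{act})\in\Pi^{pos}_{comm}(\mathcal O,K)\times\Pi^{pos}_{act}(M)$ with $\mathbb P_{M_{\pi'_{act}}}((\neg S_{avoid})\mathcal U S_{target})=v^*$ (and finite occupancy measures) we have $\bar D_{(\pi^*_{comm},\pi^*_{act})}\le\bar D_{(\pi'_{comm},\pi'_{act})}$. (OPT): variables $x_{s,a}\ge0$ for $s\in\mathcal S\setminus\mathcal T$, $a\in\mathcal A$, and $x_{o,c}\ge0$ for $o\in\mathcal O$, $c\in\mathcal A_{comm}$; minimize $\bar d=\Phi(x)$ subject to (i) flow: $\sum_{a}x_{s,a}=\sum_{s'\notin\mathcal T,\,b\in\mathcal A}x_{s',b}P(s',b)(s)+\mathbb 1[s=s_{init}]$ for all $s\in\mathcal S\setminus\mathcal T$; (ii) reach-avoid: $v^*\le\sum_{s\notin\mathcal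 T,\,a\in\mathcal A,\,s'\in S_{target}}x_{s,a}P(s,a)(s')$; (iii) consistency: $\sum_{l\in\mathcal L:(o,l)\notin\mathcal T,\,a\in\mathcal A}x_{(o,l),a}=\sum_{c\in\mathcal A_{comm}}x_{o,c}$ for all $o\in\mathcal O$.
   Context: MMDP: there are $N\ge1$ agents, identified with $[N]=\{1,\dots,N\}$. Agent $i$ has a finite local state set $\mathcal S^i$, finite local action set $\mathcal A^i$, local transition function $P^i:\mathcal S^i\times\mathcal A^i\to\Delta(\mathcal S^i)$ and initial local state $s^i_{init}$. Joint states $\mathcal S=\prod_i\mathcal S^i$, joint actions $\mathcal A=\prod_i\mathcal A^i$, joint transitions $P(s,a)(u)=\prod_{i}P^i(s^i,a^i)(u^i)$, initial state $s_{init}$. Positional joint action policies $\pi_{act}:\mathcal S\to\Delta(\mathcal A)$ form $\Pi^{pos}_{act}(M)$. Cooperative Markov game $\widehat M=(M,\mathcal O^1,\dots,\mathcal O^N,\mathcal L^1,\dots,\mathcal L^N,K)$: each $\mathcal S^i=\mathcal O^i\times\mathcal L^i$; $\mathcal O=\prod_i\mathcal O^i$, $\mathcal L=\prod_i\mathcal L^i$, joint state $s=(o,l)$. For $c\subseteq[N]$, $\mathcal L^c,\mathcal A^c$ are the products over $j\in c$, $o^c,l^c,a^c$ restrictions, $P^c((o^c,l^c),a^c)((o^c_1,l^c_1))=\prod_{j\in c}P^j((o^j,l^j),a^j)((o^j_1,l^j_1))$. $K\in\{0,\dots,N\}$; $\mathcal A_{comm}$ is the set of subsets of $[N]$ of size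 $K$. Positional communication policies $\pi_{comm}:\mathcal O\to\Delta(\mathcal A_{comm})$ form $\Pi^{pos}_{comm}(\mathcal O,K)$. Reach-avoid objective: disjoint $S_{target},S_{avoid}\subseteq\mathcal S$, $\mathcal T=S_{target}\cup S_{avoid}$; the process $S_0=s_{init},A_1,S_1,\dots$ of $M$ under $\pi_{act}$ (with $\mathbb P(A_t=a,S_t=s'\mid\dots,S_{t-1}=s)=\pi_{act}(s)(a)P(s,a)(s')$) is stopped upon entering $\mathcal T$; $\mathbb P_{M_{\pi_{act}}}((\neg S_{avoid})\mathcal U S_{target})$ is the probability of reaching $S_{target}$ without previously visiting $S_{avoid}$. Occupancy measures: $\nu_{s,a}=\sum_{t\ge1}\mathbb P(S_{t-1}=s,A_t=a,\ S_0,\dots,S_{t-1}\notin\mathcal T)$ for $s\notin\mathcal T$. The function $\Phi$: for nonnegative numbers $y_{s,a}$ ($s\notin\mathcal T$) and weights $W'(o,i)$, $W''(o,c)$, with marginals $y_{o,l^c,a^c}=\sum y_{(o,l),a}$ over $l$ with restriction $l^c$, $(o,l)\notin\mathcal T$, and $a$ with restriction $a^c$ ($y_{o,l^i,a^i}$ for $c=\{i\}$), put $h=-\sum_{s\notin\mathcal T,a}y_{s,a}\log\frac{y_{s,a}}{\sum_by_{s,b}}-\sum_{s\notin\mathcal T,a,s'}y_{s,a}P(s,a)(s')\log P(s,a)(s')$, $g^i=-\sum_{o,l^i,a^i}y_{o,l^i,a^i}W'(o,i)\log\frac{y_{o,l^i,a^i}}{\sum_{b^i}y_{o,l^i,b^i}}-\sum_{o,l^i,a^i,o^i_1,l^i_1}y_{o,l^i,a^i}W'(o,i)P^i((o^i,l^i),a^i)((o^i_1,l^i_1))\log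 P^i((o^i,l^i),a^i)((o^i_1,l^i_1))$, $g^c$ analogously with $c$ in place of $i$, $W''(o,c)$ and $P^c$; and value $-h+\sum_{i\in[N]}g^i+\sum_{c\in\mathcal A_{comm}}g^c$. In (OPT), $\Phi(x)$ is this value with $y=x$, $W'(o,i)=\sum_{c\in\mathcal A_{comm},i\notin c}x_{o,c}/\sum_{c'}x_{o,c'}$ and $W''(o,c)=x_{o,c}/\sum_{c'}x_{o,c'}$. For a policy pair, $\bar D_{(\pi_{comm},\pi_{act})}$ is this value with $y=\nu$ (occupancy measures of $\pi_{act}$), $W'(o,i)=\sum_{c\in\mathcal A_{comm},i\notin c}\pi_{comm}(o)(c)$ and $W''(o,c)=\pi_{comm}(o)(c)$. Conventions: $0\log0=0$; summands with zero occupancy are $0$. *)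

theory Defs
  imports Complex_Main "HOL-Library.FuncSet"
begin

text \<open>Agent i has local observable states Obs i, local private
states Loc i, local actions Act i, and local transition function Ptr i
(a real-valued stochastic kernel on Obs i x Loc i). Kc is the communication budget K.\<close>

record ('o, 'l, 'a) game =
  nag   :: nat
  Obs   :: "nat \<Rightarrow> 'o set"
  Loc   :: "nat \<Rightarrow> 'l set"
  Act   :: "nat \<Rightarrow> 'a set"
  Ptr   :: "nat \<Rightarrow> 'o \<times> 'l \<Rightarrow> 'a \<Rightarrow> 'o \<times> 'l \<Rightarrow> real"
  sinit :: "(nat \<Rightarrow> 'o) \<times> (nat \<Rightarrow> 'l)"
  Kc    :: nat

definition agents :: "('o,'l,'a) game \<Rightarrow> nat set" where
  "agents G = {1..nag G}"

definition jO :: "('o,'l,'a) game \<Rightarrow> (nat \<Rightarrow> 'o) set" where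
  "jO G = PiE (agents G) (Obs G)"

definition jL :: "('o,'l,'a) game \<Rightarrow> (nat \<Rightarrow> 'l) set" where
  "jL G = PiE (agents G) (Loc G)"

definition jS :: "('o,'l,'a) game \<Rightarrow> ((nat \<Rightarrow> 'o) \<times> (nat \<Rightarrow> 'l)) set" where
  "jS G = jO G \<times> jL G"

definition jA :: "('o,'l,'a) game \<Rightarrow> (nat \<Rightarrow> 'a) set" where
  "jA G = PiE (agents G) (Act G)"

definition jP :: "('o,'l,'a) game \<Rightarrow> (nat \<Rightarrow> 'o) \<times> (nat \<Rightarrow> 'l) \<Rightarrow> (nat \<Rightarrow> 'a)
    \<Rightarrow> (nat \<Rightarrow> 'o) \<times> (nat \<Rightarrow> 'l) \<Rightarrow> real" where
  "jP G s a s' = (\<Prod>i\<in>agents G. Ptr G i (fst s i, snd s i) (a i) (fst s' i, snd s' i))"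

definition Acomm :: "('o,'l,'a) game \<Rightarrow> nat set set" where
  "Acomm G = {c. c \<subseteq> agents G \<and> card c = Kc G}"

definition well_formed_game :: "('o,'l,'a) game \<Rightarrow> bool" where
  "well_formed_game G \<longleftrightarrow> nag G \<ge> 1 \<and> Kc G \<le> nag G \<and>
     (\<forall>i\<in>agents G. finite (Obs G i) \<and> Obs G i \<noteq> {} \<and> finite (Loc G i) \<and> Loc G i \<noteq> {}
        \<and> finite (Act G i) \<and> Act G i \<noteq> {}
        \<and> (\<forall>s\<in>Obs G i \<times> Loc G i. \<forall>a\<in>Act G i.
              (\<forall>s'\<in>Obs G i \<times> Loc G i. 0 \<le> Ptr G i s a s') \<and>
              (\<Sum>s'\<in>Obs G i \<times> Loc G i. Ptr G i s a s') = 1)) \<and>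
     sinit G \<in> jS G"

definition reach_avoid_obj :: "('o,'l,'a) game \<Rightarrow> ((nat \<Rightarrow> 'o) \<times> (nat \<Rightarrow> 'l)) set
    \<Rightarrow> ((nat \<Rightarrow> 'o) \<times> (nat \<Rightarrow> 'l)) set \<Rightarrow> bool" where
  "reach_avoid_obj G Tg Av \<longleftrightarrow> Tg \<subseteq> jS G \<and> Av \<subseteq> jS G \<and> Tg \<inter> Av = {}"

definition act_policy :: "('o,'l,'a) game \<Rightarrow>
    ((nat \<Rightarrow> 'o) \<times> (nat \<Rightarrow> 'l) \<Rightarrow> (nat \<Rightarrow> 'a) \<Rightarrow> real) \<Rightarrow> bool" where
  "act_policy G \<pi> \<longleftrightarrow> (\<forall>s\<in>jS G. (\<forall>a\<in>jA G. 0 \<le> \<pi> s a) \<and> (\<Sum>a\<in>jA G. \<pi> s a) = 1)"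

definition comm_policy :: "('o,'l,'a) game \<Rightarrow> ((nat \<Rightarrow> 'o) \<Rightarrow> nat set \<Rightarrow> real) \<Rightarrow> bool" where
  "comm_policy G \<pi> \<longleftrightarrow> (\<forall>ob\<in>jO G. (\<forall>c\<in>Acomm G. 0 \<le> \<pi> ob c) \<and> (\<Sum>c\<in>Acomm G. \<pi> ob c) = 1)"

text \<open>reach_n n s = probability, starting in s, of reaching Tg within n steps
without previously visiting Av (process stopped upon entering Tg \<union> Av).\<close>
primrec reach_n :: "('o,'l,'a) game \<Rightarrow> ((nat \<Rightarrow> 'o) \<times> (nat \<Rightarrow> 'l)) set
    \<Rightarrow> ((nat \<Rightarrow> 'o) \<times> (nat \<Rightarrow> 'l)) set
    \<Rightarrow> ((nat \<Rightarrow> 'o) \<times> (nat \<Rightarrow> 'l) \<Rightarrow> (nat \<Rightarrow> 'a) \<Rightarrow> real)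
    \<Rightarrow> nat \<Rightarrow> (nat \<Rightarrow> 'o) \<times> (nat \<Rightarrow> 'l) \<Rightarrow> real" where
  "reach_n G Tg Av \<pi> 0 s = (if s \<in> Tg then 1 else 0)"
| "reach_n G Tg Av \<pi> (Suc n) s =
     (if s \<in> Tg then 1 else if s \<in> Av then 0 else
        (\<Sum>a\<in>jA G. \<pi> s a * (\<Sum>s'\<in>jS G. jP G s a s' * reach_n G Tg Av \<pi> n s')))"

text \<open>P((\<not> Av) U Tg) from the initial state: the (monotone) limit of the bounded-horizon probabilities.\<close>
definition reach_prob :: "('o,'l,'a) game \<Rightarrow> ((nat \<Rightarrow> 'o) \<times> (nat \<Rightarrow> 'l)) set
    \<Rightarrow> ((nat \<Rightarrow> 'o) \<times> (nat \<Rightarrow> 'l)) set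
    \<Rightarrow> ((nat \<Rightarrow> 'o) \<times> (nat \<Rightarrow> 'l) \<Rightarrow> (nat \<Rightarrow> 'a) \<Rightarrow> real) \<Rightarrow> real" where
  "reach_prob G Tg Av \<pi> = lim (\<lambda>n. reach_n G Tg Av \<pi> n (sinit G))"

definition vstar :: "('o,'l,'a) game \<Rightarrow> ((nat \<Rightarrow> 'o) \<times> (nat \<Rightarrow> 'l)) set
    \<Rightarrow> ((nat \<Rightarrow> 'o) \<times> (nat \<Rightarrow> 'l)) set \<Rightarrow> real" where
  "vstar G Tg Av = (SUP \<pi>\<in>{\<pi>. act_policy G \<pi>}. reach_prob G Tg Av \<pi>)"

text \<open>stdist t s = P(S_t = s, S_0,...,S_t \<notin> T).\<close>
primrec stdist :: "('o,'l,'a) game \<Rightarrow> ((nat \<Rightarrow> 'o) \<times> (nat \<Rightarrow> 'l)) set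
    \<Rightarrow> ((nat \<Rightarrow> 'o) \<times> (nat \<Rightarrow> 'l) \<Rightarrow> (nat \<Rightarrow> 'a) \<Rightarrow> real)
    \<Rightarrow> nat \<Rightarrow> (nat \<Rightarrow> 'o) \<times> (nat \<Rightarrow> 'l) \<Rightarrow> real" where
  "stdist G T \<pi> 0 s = (if s = sinit G \<and> s \<notin> T then 1 else 0)"
| "stdist G T \<pi> (Suc t) s' =
     (if s' \<notin> T then (\<Sum>s\<in>jS G - T. stdist G T \<pi> t s * (\<Sum>a\<in>jA G. \<pi> s a * jP G s a s')) else 0)"

text \<open>nu_{s,a} = sum_{t>=1} P(S_{t-1}=s, A_t=a, S_0..S_{t-1} \<notin> T).\<close>
definition occ :: "('o,'l,'a) game \<Rightarrow> ((nat \<Rightarrow> 'o) \<times> (nat \<Rightarrow> 'l)) set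
    \<Rightarrow> ((nat \<Rightarrow> 'o) \<times> (nat \<Rightarrow> 'l) \<Rightarrow> (nat \<Rightarrow> 'a) \<Rightarrow> real)
    \<Rightarrow> (nat \<Rightarrow> 'o) \<times> (nat \<Rightarrow> 'l) \<Rightarrow> (nat \<Rightarrow> 'a) \<Rightarrow> real" where
  "occ G T \<pi> s a = (\<Sum>t. stdist G T \<pi> t s * \<pi> s a)"

definition finite_occ :: "('o,'l,'a) game \<Rightarrow> ((nat \<Rightarrow> 'o) \<times> (nat \<Rightarrow> 'l)) set
    \<Rightarrow> ((nat \<Rightarrow> 'o) \<times> (nat \<Rightarrow> 'l) \<Rightarrow> (nat \<Rightarrow> 'a) \<Rightarrow> real) \<Rightarrow> bool" where
  "finite_occ G T \<pi> \<longleftrightarrow> (\<forall>s\<in>jS G - T. \<forall>a\<in>jA G. summable (\<lambda>t. stdist G T \<pi> t s * \<pi> s a))"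

definition hterm :: "('o,'l,'a) game \<Rightarrow> ((nat \<Rightarrow> 'o) \<times> (nat \<Rightarrow> 'l)) set
    \<Rightarrow> ((nat \<Rightarrow> 'o) \<times> (nat \<Rightarrow> 'l) \<Rightarrow> (nat \<Rightarrow> 'a) \<Rightarrow> real) \<Rightarrow> real" where
  "hterm G T y =
     - (\<Sum>s\<in>jS G - T. \<Sum>a\<in>jA G. y s a * ln (y s a / (\<Sum>b\<in>jA G. y s b)))
     - (\<Sum>s\<in>jS G - T. \<Sum>a\<in>jA G. \<Sum>s'\<in>jS G. y s a * jP G s a s' * ln (jP G s a s'))"

definition ymarg :: "('o,'l,'a) game \<Rightarrow> ((nat \<Rightarrow> 'o) \<times> (nat \<Rightarrow> 'l)) set
    \<Rightarrow> ((nat \<Rightarrow> 'o) \<times> (nat \<Rightarrow> 'l) \<Rightarrow> (nat \<Rightarrow> 'a) \<Rightarrow> real)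
    \<Rightarrow> (nat \<Rightarrow> 'o) \<Rightarrow> nat set \<Rightarrow> (nat \<Rightarrow> 'l) \<Rightarrow> (nat \<Rightarrow> 'a) \<Rightarrow> real" where
  "ymarg G T y ob c lc ac =
     (\<Sum>l\<in>{l\<in>jL G. restrict l c = lc \<and> (ob, l) \<notin> T}.
        \<Sum>a\<in>{a\<in>jA G. restrict a c = ac}. y (ob, l) a)"

definition Pc :: "('o,'l,'a) game \<Rightarrow> nat set \<Rightarrow> (nat \<Rightarrow> 'o) \<Rightarrow> (nat \<Rightarrow> 'l) \<Rightarrow> (nat \<Rightarrow> 'a)
    \<Rightarrow> (nat \<Rightarrow> 'o) \<Rightarrow> (nat \<Rightarrow> 'l) \<Rightarrow> real" where
  "Pc G c ob lc ac o1 l1 = (\<Prod>j\<in>c. Ptr G j (ob j, lc j) (ac j) (o1 j, l1 j))"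

definition gterm :: "('o,'l,'a) game \<Rightarrow> ((nat \<Rightarrow> 'o) \<times> (nat \<Rightarrow> 'l)) set
    \<Rightarrow> ((nat \<Rightarrow> 'o) \<times> (nat \<Rightarrow> 'l) \<Rightarrow> (nat \<Rightarrow> 'a) \<Rightarrow> real)
    \<Rightarrow> ((nat \<Rightarrow> 'o) \<Rightarrow> real) \<Rightarrow> nat set \<Rightarrow> real" where
  "gterm G T y W c =
     - (\<Sum>ob\<in>jO G. \<Sum>lc\<in>PiE c (Loc G). \<Sum>ac\<in>PiE c (Act G).
          ymarg G T y ob c lc ac * W ob *
          ln (ymarg G T y ob c lc ac / (\<Sum>bc\<in>PiE c (Act G). ymarg G T y ob c lc bc)))
     - (\<Sum>ob\<in>jO G. \<Sum>lc\<in>PiE c (Loc G). \<Sum>ac\<in>PiE c (Act G).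
          \<Sum>(o1, l1)\<in>PiE c (Obs G) \<times> PiE c (Loc G).
          ymarg G T y ob c lc ac * W ob * Pc G c ob lc ac o1 l1 * ln (Pc G c ob lc ac o1 l1))"

definition PhiV :: "('o,'l,'a) game \<Rightarrow> ((nat \<Rightarrow> 'o) \<times> (nat \<Rightarrow> 'l)) set
    \<Rightarrow> ((nat \<Rightarrow> 'o) \<times> (nat \<Rightarrow> 'l) \<Rightarrow> (nat \<Rightarrow> 'a) \<Rightarrow> real)
    \<Rightarrow> ((nat \<Rightarrow> 'o) \<Rightarrow> nat \<Rightarrow> real) \<Rightarrow> ((nat \<Rightarrow> 'o) \<Rightarrow> nat set \<Rightarrow> real) \<Rightarrow> real" where
  "PhiV G T y W1 W2 =
     - hterm G T y
     + (\<Sum>i\<in>agents G. gterm G T y (\<lambda>ob. W1 ob i) {i})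
     + (\<Sum>c\<in>Acomm G. gterm G T y (\<lambda>ob. W2 ob c) c)"

definition opt_feasible :: "('o,'l,'a) game \<Rightarrow> ((nat \<Rightarrow> 'o) \<times> (nat \<Rightarrow> 'l)) set
    \<Rightarrow> ((nat \<Rightarrow> 'o) \<times> (nat \<Rightarrow> 'l)) set
    \<Rightarrow> ((nat \<Rightarrow> 'o) \<times> (nat \<Rightarrow> 'l) \<Rightarrow> (nat \<Rightarrow> 'a) \<Rightarrow> real)
    \<Rightarrow> ((nat \<Rightarrow> 'o) \<Rightarrow> nat set \<Rightarrow> real) \<Rightarrow> bool" where
  "opt_feasible G Tg Av xs xo \<longleftrightarrow>
     (let T = Tg \<union> Av in
       (\<forall>s\<in>jS G - T. \<forall>a\<in>jA G. 0 \<le> xs s a) \<and>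
       (\<forall>ob\<in>jO G. \<forall>c\<in>Acomm G. 0 \<le> xo ob c) \<and>
       (\<forall>s\<in>jS G - T. (\<Sum>a\<in>jA G. xs s a) =
           (\<Sum>s'\<in>jS G - T. \<Sum>b\<in>jA G. xs s' b * jP G s' b s) + (if s = sinit G then 1 else 0)) \<and>
       vstar G Tg Av \<le> (\<Sum>s\<in>jS G - T. \<Sum>a\<in>jA G. \<Sum>s'\<in>Tg. xs s a * jP G s a s') \<and>
       (\<forall>ob\<in>jO G. (\<Sum>l\<in>{l\<in>jL G. (ob, l) \<notin> T}. \<Sum>a\<in>jA G. xs (ob, l) a) = (\<Sum>c\<in>Acomm G. xo ob c)))"

definition opt_objective :: "('o,'l,'a) game \<Rightarrow> ((nat \<Rightarrow> 'o) \<times> (nat \<Rightarrow> 'l)) set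
    \<Rightarrow> ((nat \<Rightarrow> 'o) \<times> (nat \<Rightarrow> 'l) \<Rightarrow> (nat \<Rightarrow> 'a) \<Rightarrow> real)
    \<Rightarrow> ((nat \<Rightarrow> 'o) \<Rightarrow> nat set \<Rightarrow> real) \<Rightarrow> real" where
  "opt_objective G T xs xo =
     PhiV G T xs
       (\<lambda>ob i. (\<Sum>c\<in>{c\<in>Acomm G. i \<notin> c}. xo ob c) / (\<Sum>c'\<in>Acomm G. xo ob c'))
       (\<lambda>ob c. xo ob c / (\<Sum>c'\<in>Acomm G. xo ob c'))"

definition opt_optimal :: "('o,'l,'a) game \<Rightarrow> ((nat \<Rightarrow> 'o) \<times> (nat \<Rightarrow> 'l)) set
    \<Rightarrow> ((nat \<Rightarrow> 'o) \<times> (nat \<Rightarrow> 'l)) set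
    \<Rightarrow> ((nat \<Rightarrow> 'o) \<times> (nat \<Rightarrow> 'l) \<Rightarrow> (nat \<Rightarrow> 'a) \<Rightarrow> real)
    \<Rightarrow> ((nat \<Rightarrow> 'o) \<Rightarrow> nat set \<Rightarrow> real) \<Rightarrow> bool" where
  "opt_optimal G Tg Av xs xo \<longleftrightarrow> opt_feasible G Tg Av xs xo \<and>
     (\<forall>xs' xo'. opt_feasible G Tg Av xs' xo' \<longrightarrow>
        opt_objective G (Tg \<union> Av) xs xo \<le> opt_objective G (Tg \<union> Av) xs' xo')"

definition Dbar :: "('o,'l,'a) game \<Rightarrow> ((nat \<Rightarrow> 'o) \<times> (nat \<Rightarrow> 'l)) set
    \<Rightarrow> ((nat \<Rightarrow> 'o) \<Rightarrow> nat set \<Rightarrow> real)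
    \<Rightarrow> ((nat \<Rightarrow> 'o) \<times> (nat \<Rightarrow> 'l) \<Rightarrow> (nat \<Rightarrow> 'a) \<Rightarrow> real) \<Rightarrow> real" where
  "Dbar G T pc pa =
     PhiV G T (occ G T pa) (\<lambda>ob i. \<Sum>c\<in>{c\<in>Acomm G. i \<notin> c}. pc ob c) (\<lambda>ob c. pc ob c)"

end

theory Submission
  imports Defs
begin

(* The optimal flow xs satisfies the flow equations of the policy pa it induces, so it dominates the
   occupancy measure of pa. The difference is a nonnegative circulation, which sends no flow into
   the target; hence pa reaches the target with probability at least the bound v* imposed in (OPT).
   The occupancy measure of any policy pair attaining v* is a feasible point of (OPT) whose
   objective is the divergence of the pair, so that divergence is at least the optimal value.
   Conversely, reflecting the occupancy measure of pa through xs gives another feasible point that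
   induces the same policies. Along this segment the joint entropy term of Phi is affine, while the
   marginal terms are concave by the log-sum inequality; optimality of xs therefore bounds the
   divergence of (pc, pa) by the optimal value. *)

lemma bij_betw_PiE_pair:
  "bij_betw (\<lambda>(f, g). restrict (\<lambda>i. (f i, g i)) A) (PiE A F \<times> PiE A H) (PiE A (\<lambda>i. F i \<times> H i))"
proof (rule bij_betw_byWitness[where f'="\<lambda>h. (restrict (fst \<circ> h) A, restrict (snd \<circ> h) A)"])
  show "(\<lambda>h. (restrict (fst \<circ> h) A, restrict (snd \<circ> h) A)) ` PiE A (\<lambda>i. F i \<times> H i) \<subseteq> PiE A F \<times> PiE A H"
    by (auto simp: PiE_def Pi_def)
qed (auto simp: PiE_def extensional_def fun_eq_iff)

lemma finite_agents: "finite (agents G)"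
  by (simp add: agents_def)

lemma
  assumes "well_formed_game G"
  shows finite_jS: "finite (jS G)" and finite_jA: "finite (jA G)" and finite_jL: "finite (jL G)"
    and sinit_in_jS: "sinit G \<in> jS G"
  using assms finite_agents
  by (auto simp: well_formed_game_def jS_def jO_def jL_def jA_def intro!: finite_PiE)

lemma finite_PiE_Act:
  assumes "well_formed_game G" "c \<subseteq> agents G"
  shows "finite (PiE c (Act G))"
  using assms finite_agents unfolding well_formed_game_def
  by (intro finite_PiE) (auto intro: finite_subset)

lemma jP_nonneg:
  assumes "well_formed_game G" "s \<in> jS G" "a \<in> jA G" "s' \<in> jS G"
  shows "0 \<le> jP G s a s'"
  unfolding jP_def
proof (rule prod_nonneg)
  fix i assume i: "i \<in> agents G"
  have "(fst s i, snd s i) \<in> Obs G i \<times> Loc G i" "(fst s' i, snd s' i) \<in> Obs G i \<times> Loc G i" "a i \<in> Act G i"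
    using assms(2-4) i by (auto simp: jS_def jO_def jL_def jA_def)
  then show "0 \<le> Ptr G i (fst s i, snd s i) (a i) (fst s' i, snd s' i)"
    using assms(1) i unfolding well_formed_game_def by blast
qed

lemma sum_jP_eq_1:
  assumes "well_formed_game G" "s \<in> jS G" "a \<in> jA G"
  shows "(\<Sum>s'\<in>jS G. jP G s a s') = 1"
proof -
  let ?A = "agents G"
  have "(\<Sum>s'\<in>jS G. jP G s a s') =
      (\<Sum>g\<in>PiE ?A (\<lambda>i. Obs G i \<times> Loc G i). \<Prod>i\<in>?A. Ptr G i (fst s i, snd s i) (a i) (g i))"
    unfolding sum.reindex_bij_betw[OF bij_betw_PiE_pair, symmetric]
    unfolding jS_def jO_def jL_def jP_def
    by (intro sum.cong refl prod.cong) auto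
  also have "\<dots> = (\<Prod>i\<in>?A. \<Sum>s'\<in>Obs G i \<times> Loc G i. Ptr G i (fst s i, snd s i) (a i) s')"
    using assms(1) finite_agents by (subst prod_sum_PiE) (auto simp: well_formed_game_def)
  also have "\<dots> = (\<Prod>i\<in>?A. 1)"
  proof (rule prod.cong[OF refl])
    fix i assume i: "i \<in> ?A"
    have "(fst s i, snd s i) \<in> Obs G i \<times> Loc G i" "a i \<in> Act G i"
      using assms(2-3) i by (auto simp: jS_def jO_def jL_def jA_def)
    then show "(\<Sum>s'\<in>Obs G i \<times> Loc G i. Ptr G i (fst s i, snd s i) (a i) s') = 1"
      using assms(1) i unfolding well_formed_game_def by blast
  qed
  finally show ?thesis by simp
qed

lemma sum_jP_mono:
  assumes "well_formed_game G" "s \<in> jS G" "a \<in> jA G" "A \<subseteq> B" "B \<subseteq> jS G"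
  shows "(\<Sum>s'\<in>A. jP G s a s') \<le> (\<Sum>s'\<in>B. jP G s a s')"
  using assms by (intro sum_mono2) (auto intro: jP_nonneg finite_subset[OF _ finite_jS])

lemma stdist_nonneg:
  assumes "well_formed_game G" "act_policy G \<pi>" "s \<in> jS G"
  shows "0 \<le> stdist G T \<pi> t s"
  using assms(3)
proof (induction t arbitrary: s)
  case (Suc t)
  then show ?case
    using assms(1,2) by (auto simp: act_policy_def intro!: sum_nonneg mult_nonneg_nonneg jP_nonneg)
qed simp

subsection \<open>Flow conservation\<close>

lemma flow_exit_eq_source:
  assumes wf: "well_formed_game G" and T: "T \<subseteq> jS G"
    and flow: "\<And>s. s \<in> jS G - T \<Longrightarrow> (\<Sum>a\<in>jA G. y s a) =
        (\<Sum>s'\<in>jS G - T. \<Sum>b\<in>jA G. y s' b * jP G s' b s) + e s"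
  shows "(\<Sum>s\<in>jS G - T. \<Sum>a\<in>jA G. y s a * (\<Sum>s'\<in>T. jP G s a s')) = (\<Sum>s\<in>jS G - T. e s)"
proof -
  have stay: "(\<Sum>s'\<in>jS G - T. jP G s a s') = 1 - (\<Sum>s'\<in>T. jP G s a s')"
    if "s \<in> jS G - T" "a \<in> jA G" for s a
    using sum_jP_eq_1[OF wf, of s a] that finite_jS[OF wf] T by (simp add: sum.subset_diff[of T "jS G"])
  have "(\<Sum>s\<in>jS G - T. \<Sum>a\<in>jA G. y s a) =
      (\<Sum>s'\<in>jS G - T. (\<Sum>s\<in>jS G - T. \<Sum>b\<in>jA G. y s b * jP G s b s') + e s')"
    by (intro sum.cong refl flow)
  also have "\<dots> = (\<Sum>s\<in>jS G - T. \<Sum>a\<in>jA G. y s a * (\<Sum>s'\<in>jS G - T. jP G s a s')) + (\<Sum>s\<in>jS G - T. e s)"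
    by (simp add: sum.distrib sum_distrib_left) (subst sum.swap, rule sum.cong[OF refl], rule sum.swap)
  also have "(\<Sum>s\<in>jS G - T. \<Sum>a\<in>jA G. y s a * (\<Sum>s'\<in>jS G - T. jP G s a s')) =
      (\<Sum>s\<in>jS G - T. \<Sum>a\<in>jA G. y s a) - (\<Sum>s\<in>jS G - T. \<Sum>a\<in>jA G. y s a * (\<Sum>s'\<in>T. jP G s a s'))"
    by (simp add: stay right_diff_distrib sum_subtractf)
  finally show ?thesis by simp
qed

lemma flow_into_subset_le_source:
  assumes wf: "well_formed_game G" and T: "T \<subseteq> jS G" and Tg: "Tg \<subseteq> T"
    and nonneg: "\<And>s a. s \<in> jS G - T \<Longrightarrow> a \<in> jA G \<Longrightarrow> 0 \<le> y s a"
    and flow: "\<And>s. s \<in> jS G - T \<Longrightarrow> (\<Sum>a\<in>jA G. y s a) =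
        (\<Sum>s'\<in>jS G - T. \<Sum>b\<in>jA G. y s' b * jP G s' b s) + e s"
  shows "(\<Sum>s\<in>jS G - T. \<Sum>a\<in>jA G. \<Sum>s'\<in>Tg. y s a * jP G s a s') \<le> (\<Sum>s\<in>jS G - T. e s)"
proof -
  have "(\<Sum>s\<in>jS G - T. \<Sum>a\<in>jA G. \<Sum>s'\<in>Tg. y s a * jP G s a s') \<le>
      (\<Sum>s\<in>jS G - T. \<Sum>a\<in>jA G. y s a * (\<Sum>s'\<in>T. jP G s a s'))"
    unfolding sum_distrib_left[symmetric]
    using T Tg by (intro sum_mono mult_left_mono sum_jP_mono[OF wf] nonneg) auto
  then show ?thesis
    using flow_exit_eq_source[OF wf T flow] by simp
qed

subsection \<open>Reach-avoid probability and occupancy measures\<close>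

lemma reach_n_target: "s \<in> Tg \<Longrightarrow> reach_n G Tg Av \<pi> n s = 1"
  by (cases n) auto

lemma reach_n_avoid: "s \<in> Av \<Longrightarrow> Tg \<inter> Av = {} \<Longrightarrow> reach_n G Tg Av \<pi> n s = 0"
  by (cases n) auto

lemma reach_n_bounds:
  assumes wf: "well_formed_game G" and pol: "act_policy G \<pi>" and s: "s \<in> jS G"
  shows "0 \<le> reach_n G Tg Av \<pi> n s \<and> reach_n G Tg Av \<pi> n s \<le> 1"
  using s
proof (induction n arbitrary: s)
  case (Suc n)
  have "0 \<le> (\<Sum>a\<in>jA G. \<pi> s a * (\<Sum>s'\<in>jS G. jP G s a s' * reach_n G Tg Av \<pi> n s'))"
    using Suc pol wf by (auto simp: act_policy_def intro!: sum_nonneg mult_nonneg_nonneg jP_nonneg)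
  moreover have "(\<Sum>a\<in>jA G. \<pi> s a * (\<Sum>s'\<in>jS G. jP G s a s' * reach_n G Tg Av \<pi> n s')) \<le>
      (\<Sum>a\<in>jA G. \<pi> s a * (\<Sum>s'\<in>jS G. jP G s a s'))"
    using Suc pol wf
    by (auto simp: act_policy_def intro!: sum_mono mult_left_mono jP_nonneg mult_right_le_one_le)
  moreover have "\<dots> = 1"
    using Suc wf pol by (simp add: sum_jP_eq_1 act_policy_def)
  ultimately show ?case by auto
qed simp

definition target_flow where
  "target_flow G Tg Av \<pi> k = (\<Sum>s\<in>jS G - (Tg \<union> Av). stdist G (Tg \<union> Av) \<pi> k s *
       (\<Sum>a\<in>jA G. \<pi> s a * (\<Sum>s'\<in>Tg. jP G s a s')))"

lemma target_flow_nonneg: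
  assumes "well_formed_game G" "reach_avoid_obj G Tg Av" "act_policy G \<pi>"
  shows "0 \<le> target_flow G Tg Av \<pi> k"
  unfolding target_flow_def using assms
  by (auto simp: act_policy_def reach_avoid_obj_def
      intro!: sum_nonneg mult_nonneg_nonneg jP_nonneg stdist_nonneg)

lemma reach_n_add:
  assumes wf: "well_formed_game G" and ra: "reach_avoid_obj G Tg Av"
  shows "reach_n G Tg Av \<pi> (m + n) (sinit G) =
     (if sinit G \<in> Tg then 1 else 0) + (\<Sum>k<m. target_flow G Tg Av \<pi> k) +
     (\<Sum>s\<in>jS G - (Tg \<union> Av). stdist G (Tg \<union> Av) \<pi> m s * reach_n G Tg Av \<pi> n s)"
proof (induction m arbitrary: n)
  case 0
  have dj: "Tg \<inter> Av = {}" using ra by (simp add: reach_avoid_obj_def)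
  show ?case
  proof (cases "sinit G \<in> Tg \<union> Av")
    case True
    then have "(\<Sum>s\<in>jS G - (Tg \<union> Av). stdist G (Tg \<union> Av) \<pi> 0 s * reach_n G Tg Av \<pi> n s) = 0"
      by (intro sum.neutral) auto
    then show ?thesis using True dj by (auto simp: reach_n_target reach_n_avoid)
  next
    case False
    have "(\<Sum>s\<in>jS G - (Tg \<union> Av). stdist G (Tg \<union> Av) \<pi> 0 s * reach_n G Tg Av \<pi> n s) =
        (\<Sum>s\<in>jS G - (Tg \<union> Av). if s = sinit G then reach_n G Tg Av \<pi> n s else 0)"
      by (intro sum.cong refl) auto
    also have "\<dots> = reach_n G Tg Av \<pi> n (sinit G)"
      using False sinit_in_jS[OF wf] finite_jS[OF wf] by simp
    finally show ?thesis using False by simp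
  qed
next
  case (Suc m)
  let ?T = "Tg \<union> Av"
  let ?d = "stdist G ?T \<pi> m"
  let ?r = "reach_n G Tg Av \<pi> n"
  have dj: "Tg \<inter> Av = {}" and Tg: "Tg \<subseteq> jS G" and Av: "Av \<subseteq> jS G"
    using ra by (auto simp: reach_avoid_obj_def)
  have split: "(\<Sum>s'\<in>jS G. jP G s a s' * ?r s') =
      (\<Sum>s'\<in>Tg. jP G s a s') + (\<Sum>s'\<in>jS G - ?T. jP G s a s' * ?r s')" for s a
  proof -
    have "(\<Sum>s'\<in>jS G. jP G s a s' * ?r s') =
        (\<Sum>s'\<in>Tg. jP G s a s' * ?r s') + (\<Sum>s'\<in>jS G - Tg. jP G s a s' * ?r s')"
      using finite_jS[OF wf] Tg by (metis (no_types, lifting) add.commute sum.subset_diff)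
    also have "(\<Sum>s'\<in>jS G - Tg. jP G s a s' * ?r s') =
        (\<Sum>s'\<in>Av. jP G s a s' * ?r s') + (\<Sum>s'\<in>jS G - Tg - Av. jP G s a s' * ?r s')"
      using finite_jS[OF wf] Av dj by (subst sum.subset_diff[of Av "jS G - Tg"]) auto
    also have "jS G - Tg - Av = jS G - ?T" by auto
    finally show ?thesis using dj by (simp add: reach_n_target reach_n_avoid)
  qed
  have swap: "(\<Sum>s\<in>jS G - ?T. ?d s * (\<Sum>a\<in>jA G. \<pi> s a * (\<Sum>s'\<in>jS G - ?T. jP G s a s' * ?r s'))) =
      (\<Sum>s'\<in>jS G - ?T. stdist G ?T \<pi> (Suc m) s' * ?r s')"
  proof -
    have "(\<Sum>s\<in>jS G - ?T. ?d s * (\<Sum>a\<in>jA G. \<pi> s a * (\<Sum>s'\<in>jS G - ?T. jP G s a s' * ?r s'))) =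
        (\<Sum>s\<in>jS G - ?T. \<Sum>s'\<in>jS G - ?T. \<Sum>a\<in>jA G. ?d s * \<pi> s a * jP G s a s' * ?r s')"
      by (simp add: sum_distrib_left mult.assoc sum.swap[where A = "jA G"])
    also have "\<dots> = (\<Sum>s'\<in>jS G - ?T. \<Sum>s\<in>jS G - ?T. \<Sum>a\<in>jA G. ?d s * \<pi> s a * jP G s a s' * ?r s')"
      by (rule sum.swap)
    finally show ?thesis
      by (simp add: sum_distrib_left sum_distrib_right mult.assoc)
  qed
  have "(\<Sum>s\<in>jS G - ?T. ?d s * reach_n G Tg Av \<pi> (Suc n) s) =
      target_flow G Tg Av \<pi> m + (\<Sum>s'\<in>jS G - ?T. stdist G ?T \<pi> (Suc m) s' * ?r s')"
    unfolding target_flow_def swap[symmetric]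
    by (simp add: split distrib_left sum.distrib)
  then show ?case using Suc.IH[of "Suc n"] by simp
qed

lemma reach_n_sinit_eq:
  assumes "well_formed_game G" "reach_avoid_obj G Tg Av"
  shows "reach_n G Tg Av \<pi> m (sinit G) = (if sinit G \<in> Tg then 1 else 0) + (\<Sum>k<m. target_flow G Tg Av \<pi> k)"
  using reach_n_add[OF assms, of \<pi> m 0] by simp

lemma reach_prob_le_1:
  assumes wf: "well_formed_game G" and ra: "reach_avoid_obj G Tg Av" and pol: "act_policy G \<pi>"
  shows "reach_prob G Tg Av \<pi> \<le> 1"
proof -
  let ?X = "\<lambda>n. reach_n G Tg Av \<pi> n (sinit G)"
  have "incseq ?X"
    unfolding reach_n_sinit_eq[OF wf ra] by (intro incseq_SucI) (simp add: target_flow_nonneg[OF wf ra pol])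
  moreover have le: "\<forall>n. ?X n \<le> 1"
    using reach_n_bounds[OF wf pol sinit_in_jS[OF wf]] by simp
  ultimately have "convergent ?X"
    using incseq_convergent by (metis convergent_def)
  then show ?thesis unfolding reach_prob_def using le by (intro lim_le) auto
qed

lemma reach_prob_le_vstar:
  assumes "well_formed_game G" "reach_avoid_obj G Tg Av" "act_policy G \<pi>"
  shows "reach_prob G Tg Av \<pi> \<le> vstar G Tg Av"
  unfolding vstar_def
  by (rule cSUP_upper) (use assms reach_prob_le_1[OF assms(1,2)] in \<open>auto intro!: bdd_aboveI2\<close>)

lemma vstar_eq_1_if_sinit_target:
  assumes "act_policy G \<pi>" "sinit G \<in> Tg"
  shows "vstar G Tg Av = 1"
proof -
  have "reach_prob G Tg Av p = 1" for p
    unfolding reach_prob_def using assms(2) by (simp add: reach_n_target)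
  moreover have "Collect (act_policy G) \<noteq> {}" using assms(1) by auto
  ultimately show ?thesis unfolding vstar_def by simp
qed

lemma summable_stdist:
  assumes "act_policy G \<pi>" "finite_occ G T \<pi>" "s \<in> jS G - T"
  shows "summable (\<lambda>t. stdist G T \<pi> t s)"
proof -
  have "summable (\<lambda>t. \<Sum>a\<in>jA G. stdist G T \<pi> t s * \<pi> s a)"
    using assms by (intro summable_sum) (auto simp: finite_occ_def)
  moreover have "(\<Sum>a\<in>jA G. stdist G T \<pi> t s * \<pi> s a) = stdist G T \<pi> t s" for t
    using assms by (simp add: sum_distrib_left[symmetric] act_policy_def)
  ultimately show ?thesis by simp
qed

lemma occ_nonneg:
  assumes "well_formed_game G" "act_policy G \<pi>" "finite_occ G T \<pi>" "s \<in> jS G - T" "a \<in> jA G"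
  shows "0 \<le> occ G T \<pi> s a"
  unfolding occ_def using assms
  by (intro suminf_nonneg) (auto simp: finite_occ_def act_policy_def intro!: mult_nonneg_nonneg stdist_nonneg)

text \<open>Since the process is stopped upon entering the target, the reach-avoid probability is the
  expected number of transitions into the target.\<close>
lemma reach_prob_eq_occ:
  assumes wf: "well_formed_game G" and ra: "reach_avoid_obj G Tg Av" and fo: "finite_occ G (Tg \<union> Av) \<pi>"
  shows "reach_prob G Tg Av \<pi> = (if sinit G \<in> Tg then 1 else 0) +
     (\<Sum>s\<in>jS G - (Tg \<union> Av). \<Sum>a\<in>jA G. \<Sum>s'\<in>Tg. occ G (Tg \<union> Av) \<pi> s a * jP G s a s')"
proof -
  let ?T = "Tg \<union> Av"
  have "(\<lambda>k. \<Sum>s\<in>jS G - ?T. \<Sum>a\<in>jA G. stdist G ?T \<pi> k s * \<pi> s a * (\<Sum>s'\<in>Tg. jP G s a s')) sums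
      (\<Sum>s\<in>jS G - ?T. \<Sum>a\<in>jA G. occ G ?T \<pi> s a * (\<Sum>s'\<in>Tg. jP G s a s'))"
    unfolding occ_def using fo
    by (intro sums_sum sums_mult2 summable_sums) (auto simp: finite_occ_def)
  moreover have "target_flow G Tg Av \<pi> k =
      (\<Sum>s\<in>jS G - ?T. \<Sum>a\<in>jA G. stdist G ?T \<pi> k s * \<pi> s a * (\<Sum>s'\<in>Tg. jP G s a s'))" for k
    unfolding target_flow_def by (simp add: sum_distrib_left mult.assoc)
  ultimately have "(\<lambda>m. reach_n G Tg Av \<pi> m (sinit G)) \<longlonglongrightarrow> (if sinit G \<in> Tg then 1 else 0) +
      (\<Sum>s\<in>jS G - ?T. \<Sum>a\<in>jA G. occ G ?T \<pi> s a * (\<Sum>s'\<in>Tg. jP G s a s'))"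
    unfolding reach_n_sinit_eq[OF wf ra] by (intro tendsto_add tendsto_const) (simp add: sums_def)
  then show ?thesis unfolding reach_prob_def by (simp add: limI sum_distrib_left)
qed

lemma occ_flow:
  assumes pol: "act_policy G \<pi>" and fo: "finite_occ G T \<pi>" and s: "s \<in> jS G - T"
  shows "(\<Sum>a\<in>jA G. occ G T \<pi> s a) =
     (\<Sum>s'\<in>jS G - T. \<Sum>b\<in>jA G. occ G T \<pi> s' b * jP G s' b s) + (if s = sinit G then 1 else 0)"
proof -
  let ?d = "\<lambda>t s. stdist G T \<pi> t s"
  have sm: "summable (\<lambda>t. ?d t s' * \<pi> s' b * jP G s' b s)" if "s' \<in> jS G - T" "b \<in> jA G" for s' b
    using fo that by (auto simp: finite_occ_def intro: summable_mult2)
  have "(\<Sum>a\<in>jA G. occ G T \<pi> s a) = (\<Sum>a\<in>jA G. (\<Sum>t. ?d t s) * \<pi> s a)"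
    unfolding occ_def by (intro sum.cong refl suminf_mult2[symmetric] summable_stdist[OF pol fo s])
  also have "\<dots> = (\<Sum>t. ?d t s)"
    using pol s by (simp add: sum_distrib_left[symmetric] act_policy_def)
  also have "\<dots> = (\<Sum>t. ?d (Suc t) s) + ?d 0 s"
    using suminf_split_head[OF summable_stdist[OF pol fo s]] by simp
  also have "(\<Sum>t. ?d (Suc t) s) = (\<Sum>t. \<Sum>s'\<in>jS G - T. \<Sum>b\<in>jA G. ?d t s' * \<pi> s' b * jP G s' b s)"
    using s by (simp add: sum_distrib_left mult.assoc)
  also have "\<dots> = (\<Sum>s'\<in>jS G - T. \<Sum>b\<in>jA G. \<Sum>t. ?d t s' * \<pi> s' b * jP G s' b s)"
    using sm by (subst suminf_sum) (auto intro!: summable_sum sum.cong suminf_sum)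
  also have "\<dots> = (\<Sum>s'\<in>jS G - T. \<Sum>b\<in>jA G. occ G T \<pi> s' b * jP G s' b s)"
    unfolding occ_def using fo
    by (intro sum.cong refl suminf_mult2[symmetric]) (auto simp: finite_occ_def)
  finally show ?thesis using s by simp
qed

subsection \<open>Midpoint concavity of the objective\<close>

lemma log_sum_le:
  fixes u v U V :: real
  assumes "0 \<le> u" "0 \<le> v" "u \<le> U" "v \<le> V"
  shows "(u + v) * ln ((u + v) / (U + V)) \<le> u * ln (u / U) + v * ln (v / V)"
proof (cases "u = 0 \<or> v = 0")
  case True
  have shrink: "w * ln (w / (W + W')) \<le> w * ln (w / W)" if "0 \<le> w" "w \<le> W" "0 \<le> W'" for w W W' :: real
    using that by (cases "w = 0") (auto intro!: mult_left_mono ln_mono divide_left_mono)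
  show ?thesis
    using True assms shrink[of u U V] shrink[of v V U] by (auto simp: add.commute)
next
  case False
  then have pos: "0 < u" "0 < v" "0 < U" "0 < V" using assms by auto
  define p where "p = U * (u + v) / (u * (U + V))"
  define q where "q = V * (u + v) / (v * (U + V))"
  have "0 < p" "0 < q" using pos by (auto simp: p_def q_def)
  then have "u * ln p + v * ln q \<le> u * (p - 1) + v * (q - 1)"
    using pos by (intro add_mono mult_left_mono ln_le_minus_one) auto
  also have "u * (p - 1) + v * (q - 1) = 0"
  proof -
    have "u * p = U * (u + v) / (U + V)" "v * q = V * (u + v) / (U + V)"
      using pos by (simp_all add: p_def q_def)
    moreover have "U * (u + v) / (U + V) + V * (u + v) / (U + V) = u + v"
      using pos by (simp flip: add_divide_distrib distrib_right)
    ultimately show ?thesis by (simp add: algebra_simps)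
  qed
  finally have "u * ln p + v * ln q \<le> 0" .
  moreover have "ln p = ln ((u + v) / (U + V)) - ln (u / U)" "ln q = ln ((u + v) / (U + V)) - ln (v / V)"
    using pos by (simp_all add: p_def q_def ln_div ln_mult)
  ultimately show ?thesis by (simp add: algebra_simps)
qed

lemma log_sum_midpoint:
  fixes m0 m1 m2 M0 M1 M2 w :: real
  assumes "0 \<le> m0" "0 \<le> m2" "m0 \<le> M0" "m2 \<le> M2" "m0 + m2 = 2 * m1" "M0 + M2 = 2 * M1" "0 \<le> w"
  shows "2 * (m1 * w * ln (m1 / M1)) \<le> m0 * w * ln (m0 / M0) + m2 * w * ln (m2 / M2)"
proof -
  have "2 * (m1 * ln (m1 / M1)) = (m0 + m2) * ln ((m0 + m2) / (M0 + M2))"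
    using assms(5,6) by simp
  also have "\<dots> \<le> m0 * ln (m0 / M0) + m2 * ln (m2 / M2)"
    using assms by (intro log_sum_le) auto
  finally have "2 * (m1 * ln (m1 / M1)) \<le> m0 * ln (m0 / M0) + m2 * ln (m2 / M2)" .
  from mult_right_mono[OF this assms(7)] show ?thesis by (simp add: algebra_simps)
qed

lemma twice_sum_le_sum_add:
  fixes f g h :: "'x \<Rightarrow> real"
  shows "(\<And>x. x \<in> A \<Longrightarrow> 2 * h x \<le> f x + g x) \<Longrightarrow> 2 * sum h A \<le> sum f A + sum g A"
  by (simp add: sum.distrib[symmetric] sum_distrib_left sum_mono)

lemma sum_add_eq_twice_sum:
  fixes f g h :: "'x \<Rightarrow> real"
  shows "(\<And>x. x \<in> A \<Longrightarrow> f x + g x = 2 * h x) \<Longrightarrow> sum f A + sum g A = 2 * sum h A"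
  by (simp add: sum.distrib[symmetric] sum_distrib_left)

lemma hterm_policy_flow:
  assumes y: "\<And>s a. s \<in> jS G - T \<Longrightarrow> a \<in> jA G \<Longrightarrow> y s a = c s * p s a"
    and p: "\<And>s. s \<in> jS G - T \<Longrightarrow> (\<Sum>a\<in>jA G. p s a) = 1"
  shows "hterm G T y = - (\<Sum>s\<in>jS G - T. c s *
     (\<Sum>a\<in>jA G. p s a * ln (p s a) + (\<Sum>s'\<in>jS G. p s a * jP G s a s' * ln (jP G s a s'))))"
proof -
  have mass: "(\<Sum>b\<in>jA G. y s b) = c s" if "s \<in> jS G - T" for s
    using y[OF that] p[OF that] by (simp add: sum_distrib_left[symmetric])
  have entropy_term: "y s a * ln (y s a / (\<Sum>b\<in>jA G. y s b)) = c s * (p s a * ln (p s a))"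
    if "s \<in> jS G - T" "a \<in> jA G" for s a
    using y[OF that] mass[OF that(1)] by (cases "c s = 0") auto
  have transition_term: "(\<Sum>s\<in>jS G - T. \<Sum>a\<in>jA G. \<Sum>s'\<in>jS G. y s a * jP G s a s' * ln (jP G s a s')) =
      (\<Sum>s\<in>jS G - T. \<Sum>a\<in>jA G. \<Sum>s'\<in>jS G. c s * (p s a * jP G s a s' * ln (jP G s a s')))"
    using y by (intro sum.cong refl) (simp add: mult.assoc)
  have "hterm G T y = - (\<Sum>s\<in>jS G - T. \<Sum>a\<in>jA G. c s * (p s a * ln (p s a)))
      - (\<Sum>s\<in>jS G - T. \<Sum>a\<in>jA G. \<Sum>s'\<in>jS G. c s * (p s a * jP G s a s' * ln (jP G s a s')))"
    unfolding hterm_def transition_term by (simp only: entropy_term cong: sum.cong)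
  then show ?thesis
    by (simp add: sum_distrib_left distrib_left sum.distrib)
qed

lemma ymarg_nonneg:
  assumes "\<And>s a. s \<in> jS G - T \<Longrightarrow> a \<in> jA G \<Longrightarrow> 0 \<le> y s a" "ob \<in> jO G"
  shows "0 \<le> ymarg G T y ob c lc ac"
  unfolding ymarg_def using assms by (intro sum_nonneg) (auto simp: jS_def)

lemma ymarg_midpoint:
  assumes "\<And>s a. s \<in> jS G - T \<Longrightarrow> a \<in> jA G \<Longrightarrow> y0 s a + y2 s a = 2 * y1 s a" "ob \<in> jO G"
  shows "ymarg G T y0 ob c lc ac + ymarg G T y2 ob c lc ac = 2 * ymarg G T y1 ob c lc ac"
  unfolding ymarg_def using assms by (intro sum_add_eq_twice_sum) (auto simp: jS_def)

lemma gterm_midpoint_concave: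
  assumes mid: "\<And>s a. s \<in> jS G - T \<Longrightarrow> a \<in> jA G \<Longrightarrow> y0 s a + y2 s a = 2 * y1 s a"
    and y0: "\<And>s a. s \<in> jS G - T \<Longrightarrow> a \<in> jA G \<Longrightarrow> 0 \<le> y0 s a"
    and y2: "\<And>s a. s \<in> jS G - T \<Longrightarrow> a \<in> jA G \<Longrightarrow> 0 \<le> y2 s a"
    and W: "\<And>ob. ob \<in> jO G \<Longrightarrow> 0 \<le> W ob"
    and fin: "finite (PiE c (Act G))"
  shows "gterm G T y0 W c + gterm G T y2 W c \<le> 2 * gterm G T y1 W c"
proof -
  let ?m = "\<lambda>y ob lc ac. ymarg G T y ob c lc ac"
  let ?M = "\<lambda>y ob lc. \<Sum>bc\<in>PiE c (Act G). ?m y ob lc bc"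
  have entropy_term: "2 * (?m y1 ob lc ac * W ob * ln (?m y1 ob lc ac / ?M y1 ob lc)) \<le>
      ?m y0 ob lc ac * W ob * ln (?m y0 ob lc ac / ?M y0 ob lc) +
      ?m y2 ob lc ac * W ob * ln (?m y2 ob lc ac / ?M y2 ob lc)"
    if ob: "ob \<in> jO G" and ac: "ac \<in> PiE c (Act G)" for ob lc ac
    using ymarg_nonneg[OF y0 ob] ymarg_nonneg[OF y2 ob] ymarg_midpoint[OF mid ob] W[OF ob]
    by (intro log_sum_midpoint member_le_sum[OF ac _ fin] sum_add_eq_twice_sum)
  have transition_term: "?m y0 ob lc ac * W ob * r + ?m y2 ob lc ac * W ob * r = 2 * (?m y1 ob lc ac * W ob * r)"
    if "ob \<in> jO G" for ob lc ac r
  proof -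
    have "?m y0 ob lc ac + ?m y2 ob lc ac = 2 * ?m y1 ob lc ac"
      using mid that by (rule ymarg_midpoint)
    then have "(?m y0 ob lc ac + ?m y2 ob lc ac) * W ob * r = 2 * ?m y1 ob lc ac * W ob * r"
      by simp
    then show ?thesis by (simp add: algebra_simps)
  qed
  let ?E = "\<lambda>y. \<Sum>ob\<in>jO G. \<Sum>lc\<in>PiE c (Loc G). \<Sum>ac\<in>PiE c (Act G).
      ?m y ob lc ac * W ob * ln (?m y ob lc ac / ?M y ob lc)"
  let ?L = "\<lambda>y. \<Sum>ob\<in>jO G. \<Sum>lc\<in>PiE c (Loc G). \<Sum>ac\<in>PiE c (Act G).
      \<Sum>(o1, l1)\<in>PiE c (Obs G) \<times> PiE c (Loc G). ?m y ob lc ac * W ob * (Pc G c ob lc ac o1 l1 * ln (Pc G c ob lc ac o1 l1))"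
  have gterm: "gterm G T y W c = - ?E y - ?L y" for y
    unfolding gterm_def by (simp add: mult.assoc)
  have "2 * ?E y1 \<le> ?E y0 + ?E y2"
    by (intro twice_sum_le_sum_add entropy_term)
  moreover have "?L y0 + ?L y2 = 2 * ?L y1"
    by (intro sum_add_eq_twice_sum) (auto simp: case_prod_unfold transition_term)
  ultimately show ?thesis
    using gterm[of y0] gterm[of y1] gterm[of y2] by linarith
qed

lemma PhiV_midpoint_concave:
  assumes wf: "well_formed_game G"
    and mid: "\<And>s a. s \<in> jS G - T \<Longrightarrow> a \<in> jA G \<Longrightarrow> y0 s a + y2 s a = 2 * y1 s a"
    and y0: "\<And>s a. s \<in> jS G - T \<Longrightarrow> a \<in> jA G \<Longrightarrow> 0 \<le> y0 s a"
    and y2: "\<And>s a. s \<in> jS G - T \<Longrightarrow> a \<in> jA G \<Longrightarrow> 0 \<le> y2 s a"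
    and W1: "\<And>ob i. ob \<in> jO G \<Longrightarrow> i \<in> agents G \<Longrightarrow> 0 \<le> W1 ob i"
    and W2: "\<And>ob c. ob \<in> jO G \<Longrightarrow> c \<in> Acomm G \<Longrightarrow> 0 \<le> W2 ob c"
    and h: "hterm G T y0 + hterm G T y2 = 2 * hterm G T y1"
  shows "PhiV G T y0 W1 W2 + PhiV G T y2 W1 W2 \<le> 2 * PhiV G T y1 W1 W2"
proof -
  have "(\<Sum>i\<in>agents G. gterm G T y0 (\<lambda>ob. W1 ob i) {i}) + (\<Sum>i\<in>agents G. gterm G T y2 (\<lambda>ob. W1 ob i) {i})
      \<le> 2 * (\<Sum>i\<in>agents G. gterm G T y1 (\<lambda>ob. W1 ob i) {i})"
    unfolding sum_distrib_left sum.distrib[symmetric]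
    by (intro sum_mono gterm_midpoint_concave[OF mid y0 y2] W1 finite_PiE_Act[OF wf]) auto
  moreover have "(\<Sum>c\<in>Acomm G. gterm G T y0 (\<lambda>ob. W2 ob c) c) + (\<Sum>c\<in>Acomm G. gterm G T y2 (\<lambda>ob. W2 ob c) c)
      \<le> 2 * (\<Sum>c\<in>Acomm G. gterm G T y1 (\<lambda>ob. W2 ob c) c)"
    unfolding sum_distrib_left sum.distrib[symmetric]
    by (intro sum_mono gterm_midpoint_concave[OF mid y0 y2] W2 finite_PiE_Act[OF wf]) (auto simp: Acomm_def)
  ultimately show ?thesis
    unfolding PhiV_def distrib_left mult_minus_right using h by linarith
qed

definition obs_mass where
  "obs_mass G T y ob = (\<Sum>l\<in>{l\<in>jL G. (ob, l) \<notin> T}. \<Sum>a\<in>jA G. y (ob, l) a)"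

definition zero_on_obs where
  "zero_on_obs G T y ob \<longleftrightarrow> (\<forall>l\<in>jL G. (ob, l) \<notin> T \<longrightarrow> (\<forall>a\<in>jA G. y (ob, l) a = 0))"

lemma zero_on_obsI:
  fixes y :: "(nat \<Rightarrow> 'o) \<times> (nat \<Rightarrow> 'l) \<Rightarrow> (nat \<Rightarrow> 'a) \<Rightarrow> real"
  assumes wf: "well_formed_game G" and ob: "ob \<in> jO G"
    and nonneg: "\<And>s a. s \<in> jS G - T \<Longrightarrow> a \<in> jA G \<Longrightarrow> 0 \<le> y s a"
    and zero: "obs_mass G T y ob = 0"
  shows "zero_on_obs G T y ob"
proof -
  have nonneg': "0 \<le> y (ob, l) a" if "l \<in> {l\<in>jL G. (ob, l) \<notin> T}" "a \<in> jA G" for l a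
    using nonneg[of "(ob, l)" a] that ob by (auto simp: jS_def)
  have fin: "finite {l\<in>jL G. (ob, l) \<notin> T}" using finite_jL[OF wf] by auto
  have "\<forall>l\<in>{l\<in>jL G. (ob, l) \<notin> T}. (\<Sum>a\<in>jA G. y (ob, l) a) = 0"
    using sum_nonneg_eq_0_iff[OF fin, of "\<lambda>l. \<Sum>a\<in>jA G. y (ob, l) a"] zero nonneg'
    by (auto simp: obs_mass_def intro!: sum_nonneg)
  then show ?thesis
    unfolding zero_on_obs_def using finite_jA[OF wf] nonneg' by (auto simp: sum_nonneg_eq_0_iff)
qed

lemma ymarg_zero_on_obs: "zero_on_obs G T y ob \<Longrightarrow> ymarg G T y ob c lc ac = 0"
  unfolding zero_on_obs_def ymarg_def by (intro sum.neutral) auto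

lemma gterm_cong_weights:
  assumes "\<And>ob. ob \<in> jO G \<Longrightarrow> zero_on_obs G T y ob \<or> W ob = W' ob"
  shows "gterm G T y W c = gterm G T y W' c"
proof -
  have "ymarg G T y ob c lc ac * W ob = ymarg G T y ob c lc ac * W' ob" if "ob \<in> jO G" for ob lc ac
    using assms[OF that] ymarg_zero_on_obs by auto
  then show ?thesis unfolding gterm_def
    by (intro arg_cong2[where f = "(-)"] arg_cong[where f = uminus] sum.cong refl)
       (auto split: prod.splits)
qed

lemma PhiV_cong_weights:
  assumes "\<And>ob. ob \<in> jO G \<Longrightarrow> zero_on_obs G T y ob \<or>
      ((\<forall>i\<in>agents G. W1 ob i = W1' ob i) \<and> (\<forall>c\<in>Acomm G. W2 ob c = W2' ob c))"
  shows "PhiV G T y W1 W2 = PhiV G T y W1' W2'"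
  unfolding PhiV_def
  by (intro arg_cong2[where f = "(+)"] refl sum.cong gterm_cong_weights) (use assms in auto)

lemma opt_feasible_occ:
  assumes wf: "well_formed_game G" and ra: "reach_avoid_obj G Tg Av"
    and cp: "comm_policy G pc" and ap: "act_policy G pa" and fo: "finite_occ G (Tg \<union> Av) pa"
    and reach: "vstar G Tg Av \<le> reach_prob G Tg Av pa" and sinit: "sinit G \<notin> Tg"
  shows "opt_feasible G Tg Av (occ G (Tg \<union> Av) pa)
     (\<lambda>ob c. pc ob c * obs_mass G (Tg \<union> Av) (occ G (Tg \<union> Av) pa) ob)"
  unfolding opt_feasible_def Let_def
proof (intro conjI ballI)
  let ?T = "Tg \<union> Av"
  show "0 \<le> occ G ?T pa s a" if "s \<in> jS G - ?T" "a \<in> jA G" for s a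
    using occ_nonneg[OF wf ap fo that] .
  show "0 \<le> pc ob c * obs_mass G ?T (occ G ?T pa) ob" if "ob \<in> jO G" "c \<in> Acomm G" for ob c
    using that cp occ_nonneg[OF wf ap fo]
    by (auto simp: comm_policy_def obs_mass_def jS_def intro!: mult_nonneg_nonneg sum_nonneg)
  show "(\<Sum>a\<in>jA G. occ G ?T pa s a) = (\<Sum>s'\<in>jS G - ?T. \<Sum>b\<in>jA G. occ G ?T pa s' b * jP G s' b s) +
      (if s = sinit G then 1 else 0)" if "s \<in> jS G - ?T" for s
    using occ_flow[OF ap fo that] .
  show "vstar G Tg Av \<le> (\<Sum>s\<in>jS G - ?T. \<Sum>a\<in>jA G. \<Sum>s'\<in>Tg. occ G ?T pa s a * jP G s a s')"
    using reach reach_prob_eq_occ[OF wf ra fo] sinit by simp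
  show "(\<Sum>l\<in>{l\<in>jL G. (ob, l) \<notin> ?T}. \<Sum>a\<in>jA G. occ G ?T pa (ob, l) a) =
      (\<Sum>c\<in>Acomm G. pc ob c * obs_mass G ?T (occ G ?T pa) ob)" if "ob \<in> jO G" for ob
    using cp that by (simp add: comm_policy_def obs_mass_def flip: sum_distrib_right)
qed

lemma opt_objective_occ:
  assumes wf: "well_formed_game G" and cp: "comm_policy G pc" and ap: "act_policy G pa"
    and fo: "finite_occ G T pa"
  shows "opt_objective G T (occ G T pa) (\<lambda>ob c. pc ob c * obs_mass G T (occ G T pa) ob) = Dbar G T pc pa"
  unfolding opt_objective_def Dbar_def
proof (rule PhiV_cong_weights)
  fix ob assume ob: "ob \<in> jO G"
  let ?M = "obs_mass G T (occ G T pa) ob"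
  have pc: "(\<Sum>c\<in>Acomm G. pc ob c) = 1" using cp ob by (simp add: comm_policy_def)
  show "zero_on_obs G T (occ G T pa) ob \<or>
      ((\<forall>i\<in>agents G. (\<Sum>c\<in>{c\<in>Acomm G. i \<notin> c}. pc ob c * ?M) / (\<Sum>c'\<in>Acomm G. pc ob c' * ?M) =
          (\<Sum>c\<in>{c\<in>Acomm G. i \<notin> c}. pc ob c)) \<and>
        (\<forall>c\<in>Acomm G. pc ob c * ?M / (\<Sum>c'\<in>Acomm G. pc ob c' * ?M) = pc ob c))"
  proof (cases "?M = 0")
    case True
    then show ?thesis using zero_on_obsI[OF wf ob occ_nonneg[OF wf ap fo]] by simp
  next
    case False
    then show ?thesis using pc by (simp flip: sum_distrib_right)
  qed
qed

subsection \<open>The policies induced by an optimal solution\<close>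

locale opt_induced_policies =
  fixes G :: "('o, 'l, 'a) game"
    and Tg Av :: "((nat \<Rightarrow> 'o) \<times> (nat \<Rightarrow> 'l)) set"
    and xs :: "(nat \<Rightarrow> 'o) \<times> (nat \<Rightarrow> 'l) \<Rightarrow> (nat \<Rightarrow> 'a) \<Rightarrow> real"
    and xo :: "(nat \<Rightarrow> 'o) \<Rightarrow> nat set \<Rightarrow> real"
    and pc :: "(nat \<Rightarrow> 'o) \<Rightarrow> nat set \<Rightarrow> real"
    and pa :: "(nat \<Rightarrow> 'o) \<times> (nat \<Rightarrow> 'l) \<Rightarrow> (nat \<Rightarrow> 'a) \<Rightarrow> real"
  assumes wf: "well_formed_game G"
    and ra: "reach_avoid_obj G Tg Av"
    and opt: "opt_optimal G Tg Av xs xo"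
    and ap: "act_policy G pa"
    and pc_xo: "\<forall>ob\<in>jO G. (\<Sum>d\<in>Acomm G. xo ob d) \<noteq> 0 \<longrightarrow>
           (\<forall>c\<in>Acomm G. pc ob c = xo ob c / (\<Sum>d\<in>Acomm G. xo ob d))"
    and pa_xs: "\<forall>s\<in>jS G - (Tg \<union> Av). (\<Sum>b\<in>jA G. xs s b) \<noteq> 0 \<longrightarrow>
           (\<forall>a\<in>jA G. pa s a = xs s a / (\<Sum>b\<in>jA G. xs s b))"
begin

abbreviation "T \<equiv> Tg \<union> Av"

definition "xs_mass s = (\<Sum>b\<in>jA G. xs s b)"
definition "xo_mass ob = (\<Sum>c\<in>Acomm G. xo ob c)"
definition "visits s = (\<Sum>t. stdist G T pa t s)"

lemma T_subset: "T \<subseteq> jS G"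
  using ra by (auto simp: reach_avoid_obj_def)

lemma
  shows xs_nonneg: "\<And>s a. s \<in> jS G - T \<Longrightarrow> a \<in> jA G \<Longrightarrow> 0 \<le> xs s a"
    and xo_nonneg: "\<And>ob c. ob \<in> jO G \<Longrightarrow> c \<in> Acomm G \<Longrightarrow> 0 \<le> xo ob c"
    and xs_flow: "\<And>s. s \<in> jS G - T \<Longrightarrow> (\<Sum>a\<in>jA G. xs s a) =
           (\<Sum>s'\<in>jS G - T. \<Sum>b\<in>jA G. xs s' b * jP G s' b s) + (if s = sinit G then 1 else 0)"
    and vstar_le_xs_target: "vstar G Tg Av \<le> (\<Sum>s\<in>jS G - T. \<Sum>a\<in>jA G. \<Sum>s'\<in>Tg. xs s a * jP G s a s')"
    and obs_mass_xs: "\<And>ob. ob \<in> jO G \<Longrightarrow> obs_mass G T xs ob = xo_mass ob"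
  using opt by (auto simp: opt_optimal_def opt_feasible_def Let_def obs_mass_def xo_mass_def)

lemma xs_eq_mass_pa:
  assumes "s \<in> jS G - T" "a \<in> jA G"
  shows "xs s a = xs_mass s * pa s a"
proof (cases "xs_mass s = 0")
  case True
  then have "\<forall>b\<in>jA G. xs s b = 0"
    using assms finite_jA[OF wf] xs_nonneg unfolding xs_mass_def by (subst sum_nonneg_eq_0_iff[symmetric]) auto
  then show ?thesis using True assms by simp
next
  case False
  then show ?thesis using pa_xs assms unfolding xs_mass_def by auto
qed

text \<open>By the flow constraint, \<open>xs\<close> is a fixed point of the occupancy recursion of \<open>pa\<close>,
  so it dominates every truncated occupancy.\<close>
lemma stdist_partial_sum_le:
  "s \<in> jS G - T \<Longrightarrow> (\<Sum>k<n. stdist G T pa k s) \<le> xs_mass s"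
proof (induction n arbitrary: s)
  case 0
  then show ?case
    unfolding xs_mass_def by (simp add: sum_nonneg xs_nonneg)
next
  case (Suc n)
  have "(\<Sum>k<Suc n. stdist G T pa k s) = stdist G T pa 0 s + (\<Sum>k<n. stdist G T pa (Suc k) s)"
    by (rule sum.lessThan_Suc_shift)
  also have "(\<Sum>k<n. stdist G T pa (Suc k) s) =
      (\<Sum>s'\<in>jS G - T. (\<Sum>k<n. stdist G T pa k s') * (\<Sum>a\<in>jA G. pa s' a * jP G s' a s))"
    using Suc.prems by (simp add: sum_distrib_right) (rule sum.swap)
  also have "\<dots> \<le> (\<Sum>s'\<in>jS G - T. xs_mass s' * (\<Sum>a\<in>jA G. pa s' a * jP G s' a s))"
    using Suc.prems ap
    by (intro sum_mono mult_right_mono Suc.IH sum_nonneg mult_nonneg_nonneg jP_nonneg[OF wf])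
      (auto simp: act_policy_def)
  also have "\<dots> = (\<Sum>s'\<in>jS G - T. \<Sum>b\<in>jA G. xs s' b * jP G s' b s)"
    by (intro sum.cong refl) (simp add: sum_distrib_left xs_eq_mass_pa mult.assoc)
  also have "stdist G T pa 0 s + \<dots> = xs_mass s"
    using xs_flow[OF Suc.prems] Suc.prems by (simp add: xs_mass_def)
  finally show ?case by simp
qed

lemma summable_stdist_pa: "s \<in> jS G - T \<Longrightarrow> summable (\<lambda>t. stdist G T pa t s)"
  by (rule summableI_nonneg_bounded[where x = "xs_mass s"])
    (auto intro: stdist_nonneg[OF wf ap] stdist_partial_sum_le)

lemma visits_le_xs_mass: "s \<in> jS G - T \<Longrightarrow> visits s \<le> xs_mass s"
  unfolding visits_def by (rule suminf_le_const[OF summable_stdist_pa]) (auto intro: stdist_partial_sum_le)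

lemma finite_occ_pa: "finite_occ G T pa"
  unfolding finite_occ_def by (auto intro: summable_mult2 summable_stdist_pa)

lemma occ_eq_visits_pa: "s \<in> jS G - T \<Longrightarrow> occ G T pa s a = visits s * pa s a"
  unfolding occ_def visits_def by (rule suminf_mult2[symmetric, OF summable_stdist_pa])

lemma occ_le_xs: "s \<in> jS G - T \<Longrightarrow> a \<in> jA G \<Longrightarrow> occ G T pa s a \<le> xs s a"
  using ap by (simp add: occ_eq_visits_pa xs_eq_mass_pa visits_le_xs_mass mult_right_mono act_policy_def)

lemma sinit_notin_target: "sinit G \<notin> Tg"
proof
  assume sinit: "sinit G \<in> Tg"
  have "(\<Sum>s\<in>jS G - T. \<Sum>a\<in>jA G. \<Sum>s'\<in>Tg. xs s a * jP G s a s') \<le>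
      (\<Sum>s\<in>jS G - T. if s = sinit G then 1 else 0)"
    by (intro flow_into_subset_le_source[OF wf T_subset] xs_nonneg xs_flow) auto
  also have "\<dots> = 0" using sinit by (intro sum.neutral) auto
  finally show False
    using vstar_le_xs_target vstar_eq_1_if_sinit_target[OF ap sinit] by simp
qed

text \<open>The excess \<open>xs - occ\<close> is a nonnegative circulation, which cannot leave the
  non-terminal states.\<close>
lemma occ_target_eq_xs_target:
  "(\<Sum>s\<in>jS G - T. \<Sum>a\<in>jA G. \<Sum>s'\<in>Tg. occ G T pa s a * jP G s a s') =
   (\<Sum>s\<in>jS G - T. \<Sum>a\<in>jA G. \<Sum>s'\<in>Tg. xs s a * jP G s a s')"
proof -
  let ?c = "\<lambda>s a. xs s a - occ G T pa s a"
  have "(\<Sum>s\<in>jS G - T. \<Sum>a\<in>jA G. \<Sum>s'\<in>Tg. ?c s a * jP G s a s') \<le> (\<Sum>s\<in>jS G - T. 0)"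
  proof (intro flow_into_subset_le_source[OF wf T_subset])
    show "0 \<le> ?c s a" if "s \<in> jS G - T" "a \<in> jA G" for s a
      using occ_le_xs[OF that] by simp
    show "(\<Sum>a\<in>jA G. ?c s a) = (\<Sum>s'\<in>jS G - T. \<Sum>b\<in>jA G. ?c s' b * jP G s' b s) + 0"
      if "s \<in> jS G - T" for s
      using xs_flow[OF that] occ_flow[OF ap finite_occ_pa that]
      by (simp add: sum_subtractf left_diff_distrib)
  qed auto
  moreover have "0 \<le> (\<Sum>s\<in>jS G - T. \<Sum>a\<in>jA G. \<Sum>s'\<in>Tg. ?c s a * jP G s a s')"
    using occ_le_xs T_subset
    by (intro sum_nonneg mult_nonneg_nonneg jP_nonneg[OF wf]) (auto simp: algebra_simps)
  ultimately show ?thesis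
    by (simp add: left_diff_distrib sum_subtractf)
qed

lemma reach_prob_eq_vstar: "reach_prob G Tg Av pa = vstar G Tg Av"
  using reach_prob_eq_occ[OF wf ra finite_occ_pa] sinit_notin_target occ_target_eq_xs_target
    reach_prob_le_vstar[OF wf ra ap] vstar_le_xs_target
  by simp

definition "refl_flow s a = 2 * xs s a - occ G T pa s a"
definition "refl_comm ob c =
  (if xo_mass ob = 0 then 0 else xo ob c * (obs_mass G T refl_flow ob / xo_mass ob))"
definition "W_agent ob i = (\<Sum>c\<in>{c\<in>Acomm G. i \<notin> c}. xo ob c) / xo_mass ob"
definition "W_comm ob c = xo ob c / xo_mass ob"

lemma refl_flow_nonneg: "s \<in> jS G - T \<Longrightarrow> a \<in> jA G \<Longrightarrow> 0 \<le> refl_flow s a"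
  using occ_le_xs[of s a] xs_nonneg[of s a] by (simp add: refl_flow_def)

lemma occ_nonneg_pa: "s \<in> jS G - T \<Longrightarrow> a \<in> jA G \<Longrightarrow> 0 \<le> occ G T pa s a"
  by (rule occ_nonneg[OF wf ap finite_occ_pa])

lemma zero_on_obs_xs: "ob \<in> jO G \<Longrightarrow> xo_mass ob = 0 \<Longrightarrow> zero_on_obs G T xs ob"
  by (rule zero_on_obsI[OF wf]) (auto simp: xs_nonneg obs_mass_xs)

lemma zero_on_obs_occ: "ob \<in> jO G \<Longrightarrow> xo_mass ob = 0 \<Longrightarrow> zero_on_obs G T (occ G T pa) ob"
  using zero_on_obs_xs occ_le_xs occ_nonneg_pa unfolding zero_on_obs_def
  by (metis DiffI antisym jS_def mem_Times_iff fst_conv snd_conv)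

lemma zero_on_obs_refl: "ob \<in> jO G \<Longrightarrow> xo_mass ob = 0 \<Longrightarrow> zero_on_obs G T refl_flow ob"
  using zero_on_obs_xs zero_on_obs_occ unfolding zero_on_obs_def refl_flow_def by simp

lemma W_agent_nonneg: "ob \<in> jO G \<Longrightarrow> 0 \<le> W_agent ob i"
  unfolding W_agent_def xo_mass_def using xo_nonneg by (auto intro!: divide_nonneg_nonneg sum_nonneg)

lemma W_comm_nonneg: "ob \<in> jO G \<Longrightarrow> c \<in> Acomm G \<Longrightarrow> 0 \<le> W_comm ob c"
  unfolding W_comm_def xo_mass_def using xo_nonneg by (auto intro!: divide_nonneg_nonneg sum_nonneg)

lemma opt_objective_eq_PhiV: "opt_objective G T xs xo = PhiV G T xs W_agent W_comm"
  unfolding opt_objective_def W_agent_def W_comm_def xo_mass_def ..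

lemma Dbar_eq_PhiV: "Dbar G T pc pa = PhiV G T (occ G T pa) W_agent W_comm"
  unfolding Dbar_def
proof (rule PhiV_cong_weights)
  fix ob assume ob: "ob \<in> jO G"
  show "zero_on_obs G T (occ G T pa) ob \<or>
      ((\<forall>i\<in>agents G. (\<Sum>c\<in>{c\<in>Acomm G. i \<notin> c}. pc ob c) = W_agent ob i) \<and>
       (\<forall>c\<in>Acomm G. pc ob c = W_comm ob c))"
  proof (cases "xo_mass ob = 0")
    case True
    then show ?thesis using zero_on_obs_occ[OF ob] by simp
  next
    case False
    then have "\<And>c. c \<in> Acomm G \<Longrightarrow> pc ob c = xo ob c / xo_mass ob"
      using pc_xo ob by (simp add: xo_mass_def)
    then show ?thesis
      unfolding W_agent_def W_comm_def sum_divide_distrib by simp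
  qed
qed

lemma opt_objective_refl_eq_PhiV: "opt_objective G T refl_flow refl_comm = PhiV G T refl_flow W_agent W_comm"
  unfolding opt_objective_def
proof (rule PhiV_cong_weights)
  fix ob assume ob: "ob \<in> jO G"
  let ?r = "obs_mass G T refl_flow ob / xo_mass ob"
  show "zero_on_obs G T refl_flow ob \<or>
      ((\<forall>i\<in>agents G. (\<Sum>c\<in>{c\<in>Acomm G. i \<notin> c}. refl_comm ob c) / (\<Sum>c'\<in>Acomm G. refl_comm ob c') =
          W_agent ob i) \<and>
       (\<forall>c\<in>Acomm G. refl_comm ob c / (\<Sum>c'\<in>Acomm G. refl_comm ob c') = W_comm ob c))"
  proof (cases "xo_mass ob = 0 \<or> obs_mass G T refl_flow ob = 0")
    case True
    moreover have "zero_on_obs G T refl_flow ob" if "obs_mass G T refl_flow ob = 0"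
      by (rule zero_on_obsI[OF wf ob]) (use refl_flow_nonneg that in auto)
    ultimately show ?thesis
      using zero_on_obs_refl[OF ob] by auto
  next
    case False
    then have "(\<Sum>c\<in>A. refl_comm ob c) = (\<Sum>c\<in>A. xo ob c) * ?r" for A
      by (subst sum_distrib_right) (simp add: refl_comm_def)
    then show ?thesis
      using False unfolding W_agent_def W_comm_def by (simp add: xo_mass_def refl_comm_def)
  qed
qed

lemma opt_feasible_refl: "opt_feasible G Tg Av refl_flow refl_comm"
  unfolding opt_feasible_def Let_def
proof (intro conjI ballI)
  show "0 \<le> refl_flow s a" if "s \<in> jS G - T" "a \<in> jA G" for s a
    using refl_flow_nonneg that .
  show "0 \<le> refl_comm ob c" if "ob \<in> jO G" "c \<in> Acomm G" for ob c
    unfolding refl_comm_def xo_mass_def obs_mass_def using that xo_nonneg refl_flow_nonneg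
    by (auto simp: jS_def intro!: mult_nonneg_nonneg divide_nonneg_nonneg sum_nonneg)
  show "(\<Sum>a\<in>jA G. refl_flow s a) =
      (\<Sum>s'\<in>jS G - T. \<Sum>b\<in>jA G. refl_flow s' b * jP G s' b s) + (if s = sinit G then 1 else 0)"
    if s: "s \<in> jS G - T" for s
  proof -
    have "(\<Sum>a\<in>jA G. refl_flow s a) = 2 * (\<Sum>a\<in>jA G. xs s a) - (\<Sum>a\<in>jA G. occ G T pa s a)"
      by (simp add: refl_flow_def sum_subtractf sum_distrib_left)
    moreover have "(\<Sum>s'\<in>jS G - T. \<Sum>b\<in>jA G. refl_flow s' b * jP G s' b s) =
        2 * (\<Sum>s'\<in>jS G - T. \<Sum>b\<in>jA G. xs s' b * jP G s' b s) -
        (\<Sum>s'\<in>jS G - T. \<Sum>b\<in>jA G. occ G T pa s' b * jP G s' b s)"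
      by (simp add: refl_flow_def sum_subtractf sum_distrib_left left_diff_distrib mult.assoc)
    ultimately show ?thesis
      using xs_flow[OF s] occ_flow[OF ap finite_occ_pa s] by linarith
  qed
  show "vstar G Tg Av \<le> (\<Sum>s\<in>jS G - T. \<Sum>a\<in>jA G. \<Sum>s'\<in>Tg. refl_flow s a * jP G s a s')"
  proof -
    have "(\<Sum>s\<in>jS G - T. \<Sum>a\<in>jA G. \<Sum>s'\<in>Tg. refl_flow s a * jP G s a s') =
        2 * (\<Sum>s\<in>jS G - T. \<Sum>a\<in>jA G. \<Sum>s'\<in>Tg. xs s a * jP G s a s') -
        (\<Sum>s\<in>jS G - T. \<Sum>a\<in>jA G. \<Sum>s'\<in>Tg. occ G T pa s a * jP G s a s')"
      by (simp add: refl_flow_def sum_subtractf left_diff_distrib sum_distrib_left mult.assoc)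
    then show ?thesis
      using occ_target_eq_xs_target vstar_le_xs_target by linarith
  qed
  show "(\<Sum>l\<in>{l\<in>jL G. (ob, l) \<notin> T}. \<Sum>a\<in>jA G. refl_flow (ob, l) a) = (\<Sum>c\<in>Acomm G. refl_comm ob c)"
    if ob: "ob \<in> jO G" for ob
  proof (cases "xo_mass ob = 0")
    case True
    then show ?thesis
      using zero_on_obs_refl[OF ob] by (simp add: zero_on_obs_def refl_comm_def)
  next
    case False
    then show ?thesis
      by (simp add: refl_comm_def obs_mass_def xo_mass_def flip: sum_divide_distrib sum_distrib_right)
  qed
qed

lemma hterm_midpoint_occ_refl:
  "hterm G T (occ G T pa) + hterm G T refl_flow = 2 * hterm G T xs"
proof -
  define H where "H s = (\<Sum>a\<in>jA G. pa s a * ln (pa s a) +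
      (\<Sum>s'\<in>jS G. pa s a * jP G s a s' * ln (jP G s a s')))" for s
  have pa: "(\<Sum>a\<in>jA G. pa s a) = 1" if "s \<in> jS G - T" for s
    using ap that by (simp add: act_policy_def)
  have "hterm G T (occ G T pa) = - (\<Sum>s\<in>jS G - T. visits s * H s)"
    unfolding H_def by (rule hterm_policy_flow[OF _ pa]) (simp add: occ_eq_visits_pa)
  moreover have "hterm G T xs = - (\<Sum>s\<in>jS G - T. xs_mass s * H s)"
    unfolding H_def by (rule hterm_policy_flow[OF _ pa]) (simp add: xs_eq_mass_pa)
  moreover have "hterm G T refl_flow = - (\<Sum>s\<in>jS G - T. (2 * xs_mass s - visits s) * H s)"
    unfolding H_def
    by (rule hterm_policy_flow[OF _ pa]) (simp add: refl_flow_def occ_eq_visits_pa xs_eq_mass_pa algebra_simps)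
  ultimately show ?thesis
    by (simp add: algebra_simps sum_subtractf sum.distrib sum_distrib_left)
qed

lemma Dbar_le_opt_objective: "Dbar G T pc pa \<le> opt_objective G T xs xo"
proof -
  have "PhiV G T (occ G T pa) W_agent W_comm + PhiV G T refl_flow W_agent W_comm \<le>
      2 * PhiV G T xs W_agent W_comm"
    using occ_nonneg_pa refl_flow_nonneg W_agent_nonneg W_comm_nonneg hterm_midpoint_occ_refl
    by (intro PhiV_midpoint_concave[OF wf]) (auto simp: refl_flow_def)
  moreover have "opt_objective G T xs xo \<le> opt_objective G T refl_flow refl_comm"
    using opt opt_feasible_refl by (simp add: opt_optimal_def)
  ultimately show ?thesis
    unfolding Dbar_eq_PhiV opt_objective_eq_PhiV opt_objective_refl_eq_PhiV by linarith
qed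

end

theorem theorem2:
  fixes G :: "('o, 'l, 'a) game"
    and Tg Av :: "((nat \<Rightarrow> 'o) \<times> (nat \<Rightarrow> 'l)) set"
    and xs :: "(nat \<Rightarrow> 'o) \<times> (nat \<Rightarrow> 'l) \<Rightarrow> (nat \<Rightarrow> 'a) \<Rightarrow> real"
    and xo :: "(nat \<Rightarrow> 'o) \<Rightarrow> nat set \<Rightarrow> real"
    and pc :: "(nat \<Rightarrow> 'o) \<Rightarrow> nat set \<Rightarrow> real"
    and pa :: "(nat \<Rightarrow> 'o) \<times> (nat \<Rightarrow> 'l) \<Rightarrow> (nat \<Rightarrow> 'a) \<Rightarrow> real"
  assumes "well_formed_game G"
    and "reach_avoid_obj G Tg Av"
    and "opt_optimal G Tg Av xs xo"
    and "comm_policy G pc"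
    and "act_policy G pa"
    and "\<forall>ob\<in>jO G. (\<Sum>d\<in>Acomm G. xo ob d) \<noteq> 0 \<longrightarrow>
           (\<forall>c\<in>Acomm G. pc ob c = xo ob c / (\<Sum>d\<in>Acomm G. xo ob d))"
    and "\<forall>s\<in>jS G - (Tg \<union> Av). (\<Sum>b\<in>jA G. xs s b) \<noteq> 0 \<longrightarrow>
           (\<forall>a\<in>jA G. pa s a = xs s a / (\<Sum>b\<in>jA G. xs s b))"
  shows "reach_prob G Tg Av pa = vstar G Tg Av \<and>
         (\<forall>pc' pa'. comm_policy G pc' \<and> act_policy G pa' \<and>
            reach_prob G Tg Av pa' = vstar G Tg Av \<and> finite_occ G (Tg \<union> Av) pa' \<longrightarrow>
            Dbar G (Tg \<union> Av) pc pa \<le> Dbar G (Tg \<union> Av) pc' pa')"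
proof -
  interpret opt_induced_policies G Tg Av xs xo pc pa
    using assms by unfold_locales
  have "opt_objective G T xs xo \<le> Dbar G T pc' pa'"
    if cp': "comm_policy G pc'" and ap': "act_policy G pa'"
      and reach: "reach_prob G Tg Av pa' = vstar G Tg Av" and fo': "finite_occ G T pa'" for pc' pa'
  proof -
    let ?xo' = "\<lambda>ob c. pc' ob c * obs_mass G T (occ G T pa') ob"
    have "opt_feasible G Tg Av (occ G T pa') ?xo'"
      using opt_feasible_occ[OF wf ra cp' ap' fo'] reach sinit_notin_target by simp
    then have "opt_objective G T xs xo \<le> opt_objective G T (occ G T pa') ?xo'"
      using opt by (simp add: opt_optimal_def)
    then show ?thesis
      unfolding opt_objective_occ[OF wf cp' ap' fo'] .
  qed
  then show ?thesis
    using reach_prob_eq_vstar Dbar_le_opt_objective by fastforce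
qed

end
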